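(* Let $\alpha\in(0,1)$ and $k\in\mathbb{Z}\setminus\{0\}$, and let $R_{G_{\alpha,k}}$ be the bounded integral operator on $L^2(\mathbb{R}^+)$ with kernel $G_{\alpha,k}$. Then $\mathrm{ran}\,R_{G_{\alpha,k}}\subset L^2(\mathbb{R}^+,\langle x\rangle^{4\alpha}\mathrm{d}x)$.
   Context: $\langle x\rangle=\sqrt{1+x^2}$. $\Phi_{\alpha,k}(x)=\sqrt{\frac{\pi(1+\alpha)}{2|k|}}x^{-\alpha/2}e^{-\frac{|k|}{1+\alpha}x^{1+\alpha}}$, $F_{\alpha,k}(x)=\sqrt{\frac{2(1+\alpha)}{\pi|k|}}x^{-\alpha/2}\sinh\big(\frac{|k|}{1+\alpha}x^{1+\alpha}\big)$ for $x>0$, and $G_{\alpha,k}(r,\rho)=\frac{1}{1+\alpha}\Phi_{\alpha,k}(r)F_{\alpha,k}(\rho)$ if $0<\rho<r$, $G_{\alpha,k}(r,\rho)=\frac{1}{1+\alpha}F_{\alpha,k}(r)\Phi_{\alpha,k}(\rho)$ if $0<r<\rho$. *)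

theory Defs
  imports "HOL-Analysis.Analysis"
begin

definition jbr :: "real \<Rightarrow> real" where
  "jbr x = sqrt (1 + x\<^sup>2)"

definition Phi :: "real \<Rightarrow> int \<Rightarrow> real \<Rightarrow> real" where
  "Phi \<alpha> k x = sqrt (pi * (1 + \<alpha>) / (2 * \<bar>real_of_int k\<bar>)) * x powr (-\<alpha>/2)
      * exp (- (\<bar>real_of_int k\<bar> / (1 + \<alpha>)) * x powr (1 + \<alpha>))"

definition Fk :: "real \<Rightarrow> int \<Rightarrow> real \<Rightarrow> real" where
  "Fk \<alpha> k x = sqrt (2 * (1 + \<alpha>) / (pi * \<bar>real_of_int k\<bar>)) * x powr (-\<alpha>/2)
      * sinh ((\<bar>real_of_int k\<bar> / (1 + \<alpha>)) * x powr (1 + \<alpha>))"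

text \<open>Green kernel; the diagonal r = \<rho> (a null set) is assigned the second branch.\<close>
definition Gk :: "real \<Rightarrow> int \<Rightarrow> real \<Rightarrow> real \<Rightarrow> real" where
  "Gk \<alpha> k r \<rho> = (if \<rho> < r then Phi \<alpha> k r * Fk \<alpha> k \<rho> / (1 + \<alpha>)
                    else Fk \<alpha> k r * Phi \<alpha> k \<rho> / (1 + \<alpha>))"

definition RG :: "real \<Rightarrow> int \<Rightarrow> (real \<Rightarrow> complex) \<Rightarrow> real \<Rightarrow> complex" where
  "RG \<alpha> k f r = (LINT \<rho>:{0<..}|lborel. complex_of_real (Gk \<alpha> k r \<rho>) * f \<rho>)"

end

theory Submission
  imports Defs
begin

(* A weighted Schur test. Put w(x) = <x>^(2 alpha) and H(x,y) = max(w x, w y) |G(x,y)|, so that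
   w(r) |R_G f(r)| <= int H(r,rho) |f(rho)| drho. H is symmetric, so if sup_x int H(x,y) dy = C < oo,
   Cauchy-Schwarz and Fubini bound the L^2 norm of the right-hand side by C ||f||_2.
   For 0 < n <= m, |k| G(m,n) = (m n)^(-alpha/2) exp(-c m^(1+alpha)) sinh(c n^(1+alpha)) with
   c = |k|/(1+alpha), and the row bound comes from three regimes: near the origin H is bounded;
   near the diagonal (n >= m/2) the weight and the prefactor contribute O(x^alpha) while the
   exponentials combine to exp(-(c/2) x^alpha |x - y|), whose integral in y is O(x^(-alpha));
   away from the diagonal (n <= m/2) the decay exp(-c m^(1+alpha)/2) beats the polynomial weight. *)

lemma sinh_le_exp_half: "sinh (t::real) \<le> exp t / 2"
  unfolding sinh_def by (simp add: field_simps)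

lemma sinh_le_mult_exp:
  assumes "0 \<le> (t::real)"
  shows "sinh t \<le> t * exp t"
proof -
  have "1 - exp (-2*t) \<le> 2*t"
    using exp_ge_add_one_self[of "-2*t"] by simp
  then have "exp t * (1 - exp (-2*t)) \<le> exp t * (2*t)"
    by (intro mult_left_mono) auto
  moreover have "exp t * exp (-2*t) = exp (-t)"
    by (simp add: exp_add[symmetric])
  ultimately show ?thesis
    unfolding sinh_def by (simp add: algebra_simps)
qed

lemma exp_mult_sinh_le_half_exp: "exp (- a) * sinh b \<le> exp (b - a) / (2::real)"
  using mult_left_mono[OF sinh_le_exp_half[of b], of "exp (- a)"]
  by (simp add: exp_diff exp_minus field_simps)

lemma exp_mult_sinh_le:
  fixes a b :: real
  assumes "0 \<le> b" "b \<le> a"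
  shows "exp (- a) * sinh b \<le> b"
proof -
  have "exp (- a) * sinh b \<le> exp (- a) * (b * exp b)"
    by (intro mult_left_mono sinh_le_mult_exp assms) simp
  also have "\<dots> = b * exp (b - a)"
    by (simp add: exp_diff exp_minus field_simps)
  also have "\<dots> \<le> b"
    using assms by (simp add: mult_left_le)
  finally show ?thesis .
qed

lemma borel_measurable_sinh[measurable]: "(sinh :: real \<Rightarrow> real) \<in> borel_measurable borel"
  unfolding sinh_def by measurable

lemma power2_le_4_exp:
  assumes "0 \<le> (x::real)"
  shows "x\<^sup>2 \<le> 4 * exp x"
proof -
  have "x/2 \<le> exp (x/2)"
    using exp_ge_add_one_self[of "x/2"] by linarith
  then have "(x/2)\<^sup>2 \<le> (exp (x/2))\<^sup>2"
    using assms by (intro power_mono) auto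
  also have "(exp (x/2))\<^sup>2 = exp x"
    by (simp add: power2_eq_square exp_add[symmetric])
  finally show ?thesis
    by (simp add: power2_eq_square)
qed

lemma power2_mult_exp_le:
  fixes c m :: real
  assumes "0 < c" "0 \<le> m"
  shows "m\<^sup>2 * exp (- (c/2) * m) \<le> 64 / c\<^sup>2 * exp (- (c/4) * m)"
proof -
  have "m\<^sup>2 = 16 / c\<^sup>2 * (c * m / 4)\<^sup>2"
    using assms by (simp add: power_mult_distrib power_divide)
  also have "\<dots> \<le> 16 / c\<^sup>2 * (4 * exp (c * m / 4))"
    using assms by (intro mult_left_mono power2_le_4_exp) auto
  finally have "m\<^sup>2 * exp (- (c/2) * m) \<le> 64 / c\<^sup>2 * exp (c * m / 4) * exp (- (c/2) * m)"
    by (intro mult_right_mono) auto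
  also have "\<dots> = 64 / c\<^sup>2 * exp (- (c/4) * m)"
    by (simp add: mult.assoc exp_add[symmetric])
  finally show ?thesis .
qed

lemma powr_mult_diff_le_diff_powr:
  fixes n m \<alpha> :: real
  assumes "0 < \<alpha>" "0 < n" "n \<le> m"
  shows "n powr \<alpha> * (m - n) \<le> m powr (1 + \<alpha>) - n powr (1 + \<alpha>)"
proof -
  have "m * n powr \<alpha> \<le> m * m powr \<alpha>"
    using assms by (intro mult_left_mono powr_mono2) auto
  moreover have "m powr (1 + \<alpha>) = m * m powr \<alpha>" "n powr (1 + \<alpha>) = n * n powr \<alpha>"
    using assms by (auto simp: powr_add)
  ultimately show ?thesis
    by (simp add: algebra_simps)
qed

lemma powr_le_half_powr:
  fixes n m \<alpha> :: real
  assumes "0 < \<alpha>" "0 < n" "n \<le> m / 2"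
  shows "n powr (1 + \<alpha>) \<le> m powr (1 + \<alpha>) / 2"
proof -
  have "n powr (1 + \<alpha>) \<le> (m / 2) powr (1 + \<alpha>)"
    using assms by (intro powr_mono2) auto
  also have "\<dots> = m powr (1 + \<alpha>) / 2 powr (1 + \<alpha>)"
    using assms by (simp add: powr_divide)
  also have "\<dots> \<le> m powr (1 + \<alpha>) / 2"
    using assms powr_mono[of 1 "1 + \<alpha>" "2::real"] by (intro divide_left_mono) auto
  finally show ?thesis .
qed

lemma two_powr_le_two:
  assumes "0 \<le> \<beta>" "\<beta> \<le> 1"
  shows "(2::real) powr \<beta> \<le> 2"
  using powr_mono[of \<beta> 1 "2::real"] assms by simp

lemma jbr_ge_1: "1 \<le> jbr x"
  unfolding jbr_def by simp

lemma jbr_mono: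
  assumes "0 \<le> x" "x \<le> y"
  shows "jbr x \<le> jbr y"
  unfolding jbr_def using assms by (simp add: power_mono)

lemma jbr_powr_ge_1:
  assumes "0 \<le> \<beta>"
  shows "1 \<le> jbr x powr \<beta>"
  using jbr_ge_1[of x] assms by (simp add: ge_one_powr_ge_zero)

lemma max_jbr_powr:
  assumes "0 \<le> \<beta>" "0 \<le> x" "0 \<le> y"
  shows "max (jbr x powr \<beta>) (jbr y powr \<beta>) = jbr (max x y) powr \<beta>"
proof -
  have mono: "jbr a powr \<beta> \<le> jbr b powr \<beta>" if "0 \<le> a" "a \<le> b" for a b
    using that assms jbr_mono[of a b] jbr_ge_1[of a] by (intro powr_mono2) auto
  show ?thesis
    using assms mono[of x y] mono[of y x] by (auto simp: max_def)
qed

lemma jbr_powr_two_mult: "jbr x powr (2 * \<beta>) = (1 + x\<^sup>2) powr \<beta>"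
  unfolding jbr_def by (simp add: powr_half_sqrt[symmetric] powr_powr)

lemma jbr_powr_le_1_plus_power2:
  assumes "\<beta> \<le> 1"
  shows "jbr x powr (2 * \<beta>) \<le> 1 + x\<^sup>2"
proof -
  have "(1 + x\<^sup>2) powr \<beta> \<le> (1 + x\<^sup>2) powr 1"
    using assms by (intro powr_mono) auto
  then show ?thesis
    by (simp add: jbr_powr_two_mult)
qed

lemma jbr_powr_le_2_mult_powr:
  assumes "0 \<le> \<beta>" "\<beta> \<le> 1" "1 \<le> x"
  shows "jbr x powr (2 * \<beta>) \<le> 2 * x powr (2 * \<beta>)"
proof -
  have "jbr x powr (2 * \<beta>) \<le> (2 * x\<^sup>2) powr \<beta>"
    unfolding jbr_powr_two_mult using assms by (intro powr_mono2) auto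
  also have "\<dots> = 2 powr \<beta> * x powr (2 * \<beta>)"
    using assms by (simp add: powr_mult powr_powr flip: powr_numeral)
  also have "\<dots> \<le> 2 * x powr (2 * \<beta>)"
    using assms two_powr_le_two by (intro mult_right_mono) auto
  finally show ?thesis .
qed

lemma borel_measurable_jbr[measurable (raw)]:
  assumes [measurable]: "f \<in> borel_measurable M"
  shows "(\<lambda>z. jbr (f z)) \<in> borel_measurable M"
  unfolding jbr_def by measurable

section \<open>Exponential integrals and the Schur test\<close>

lemma nn_integral_exp_neg_halfline:
  fixes \<mu> :: real
  assumes "0 < \<mu>"
  shows "(\<integral>\<^sup>+y. ennreal (indicator {0..} y * exp (- \<mu> * y)) \<partial>lborel) = ennreal (1 / \<mu>)"
  using nn_integral_has_integral_lebesgue[OF _ has_integral_exp_minus_to_infinity[OF assms, of 0]]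
  by simp

lemma nn_integral_exp_neg_abs_le:
  fixes \<mu> :: real
  assumes "0 < \<mu>"
  shows "(\<integral>\<^sup>+z. ennreal (exp (- \<mu> * \<bar>z\<bar>)) \<partial>lborel) \<le> ennreal (2 / \<mu>)"
proof -
  define f where "f z = ennreal (indicator {0..} z * exp (- \<mu> * z))" for z :: real
  have [measurable]: "f \<in> borel_measurable borel"
    unfolding f_def by measurable
  have "(\<integral>\<^sup>+z. ennreal (exp (- \<mu> * \<bar>z\<bar>)) \<partial>lborel) \<le> (\<integral>\<^sup>+z. f z + f (- z) \<partial>lborel)"
    by (intro nn_integral_mono) (auto simp: f_def indicator_def)
  also have "\<dots> = (\<integral>\<^sup>+z. f z \<partial>lborel) + (\<integral>\<^sup>+z. f (- z) \<partial>lborel)"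
    by (intro nn_integral_add) auto
  also have "(\<integral>\<^sup>+z. f (- z) \<partial>lborel) = (\<integral>\<^sup>+z. f z \<partial>lborel)"
    using nn_integral_real_affine[of f "-1" 0] by simp
  also have "(\<integral>\<^sup>+z. f z \<partial>lborel) = ennreal (1 / \<mu>)"
    unfolding f_def using assms by (rule nn_integral_exp_neg_halfline)
  finally show ?thesis
    using assms by (simp flip: ennreal_plus)
qed

lemma nn_integral_scaled_exp_neg_dist_le:
  fixes \<mu> s x :: real
  assumes \<mu>: "0 < \<mu>" and s: "0 < s"
  shows "(\<integral>\<^sup>+y. ennreal (s * exp (- (\<mu> * s) * \<bar>x - y\<bar>)) \<partial>lborel) \<le> ennreal (2 / \<mu>)"
proof -
  define f where "f y = ennreal (s * exp (- (\<mu> * s) * \<bar>x - y\<bar>))" for y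
  have "f \<in> borel_measurable borel"
    unfolding f_def by measurable
  then have "(\<integral>\<^sup>+y. f y \<partial>lborel) = ennreal (1 / s) * (\<integral>\<^sup>+z. f (x + z / s) \<partial>lborel)"
    using nn_integral_real_affine[of f "1 / s" x] s by simp
  also have "\<dots> = ennreal (1 / s) * (\<integral>\<^sup>+z. ennreal s * ennreal (exp (- \<mu> * \<bar>z\<bar>)) \<partial>lborel)"
  proof -
    have "(\<mu> * s) * \<bar>x - (x + z / s)\<bar> = \<mu> * \<bar>z\<bar>" for z
      using s by (simp add: abs_divide)
    then show ?thesis
      using s by (simp add: f_def ennreal_mult)
  qed
  also have "\<dots> = ennreal (1 / s) * ennreal s * (\<integral>\<^sup>+z. ennreal (exp (- \<mu> * \<bar>z\<bar>)) \<partial>lborel)"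
    by (subst nn_integral_cmult) (auto simp: mult.assoc)
  also have "\<dots> = (\<integral>\<^sup>+z. ennreal (exp (- \<mu> * \<bar>z\<bar>)) \<partial>lborel)"
    using s by (simp flip: ennreal_mult)
  also have "\<dots> \<le> ennreal (2 / \<mu>)"
    using \<mu> by (rule nn_integral_exp_neg_abs_le)
  finally show ?thesis
    unfolding f_def .
qed

lemma Cauchy_Schwarz_nn_integral_weighted:
  fixes h u :: "'a \<Rightarrow> real"
  assumes [measurable]: "h \<in> borel_measurable M" "u \<in> borel_measurable M"
    and h_nonneg: "\<And>y. 0 \<le> h y" and u_nonneg: "\<And>y. 0 \<le> u y"
  shows "(\<integral>\<^sup>+y. ennreal (h y * u y) \<partial>M)\<^sup>2
    \<le> (\<integral>\<^sup>+y. ennreal (h y) \<partial>M) * (\<integral>\<^sup>+y. ennreal (h y * (u y)\<^sup>2) \<partial>M)"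
proof -
  have "ennreal (sqrt (h y)) * ennreal (sqrt (h y) * u y) = ennreal (h y * u y)"
    "(ennreal (sqrt (h y)))\<^sup>2 = ennreal (h y)"
    "(ennreal (sqrt (h y) * u y))\<^sup>2 = ennreal (h y * (u y)\<^sup>2)" for y
    using h_nonneg[of y] u_nonneg[of y]
    by (simp_all add: ennreal_power power_mult_distrib mult.assoc flip: ennreal_mult')
  moreover have "(\<integral>\<^sup>+y. ennreal (sqrt (h y)) * ennreal (sqrt (h y) * u y) \<partial>M)\<^sup>2
    \<le> (\<integral>\<^sup>+y. (ennreal (sqrt (h y)))\<^sup>2 \<partial>M) * (\<integral>\<^sup>+y. (ennreal (sqrt (h y) * u y))\<^sup>2 \<partial>M)"
    by (rule Cauchy_Schwarz_nn_integral) measurable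
  ultimately show ?thesis
    by simp
qed

lemma Schur_test_nn_integral:
  fixes K :: "'a \<Rightarrow> 'b \<Rightarrow> real" and u :: "'b \<Rightarrow> real"
  assumes "sigma_finite_measure M" "sigma_finite_measure N"
    and K_meas[measurable]: "(\<lambda>(x, y). K x y) \<in> borel_measurable (M \<Otimes>\<^sub>M N)"
    and [measurable]: "u \<in> borel_measurable N"
    and K_nonneg: "\<And>x y. 0 \<le> K x y" and u_nonneg: "\<And>y. 0 \<le> u y"
    and rows: "\<And>x. x \<in> space M \<Longrightarrow> (\<integral>\<^sup>+y. ennreal (K x y) \<partial>N) \<le> A"
    and columns: "\<And>y. y \<in> space N \<Longrightarrow> (\<integral>\<^sup>+x. ennreal (K x y) \<partial>M) \<le> B"
  shows "(\<integral>\<^sup>+x. (\<integral>\<^sup>+y. ennreal (K x y * u y) \<partial>N)\<^sup>2 \<partial>M) \<le> A * B * (\<integral>\<^sup>+y. ennreal ((u y)\<^sup>2) \<partial>N)"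
proof -
  interpret M: sigma_finite_measure M by fact
  interpret N: sigma_finite_measure N by fact
  interpret pair_sigma_finite M N ..
  have "(\<integral>\<^sup>+x. (\<integral>\<^sup>+y. ennreal (K x y * u y) \<partial>N)\<^sup>2 \<partial>M)
      \<le> (\<integral>\<^sup>+x. A * (\<integral>\<^sup>+y. ennreal (K x y * (u y)\<^sup>2) \<partial>N) \<partial>M)"
  proof (rule nn_integral_mono)
    fix x assume "x \<in> space M"
    then have "K x \<in> borel_measurable N"
      using measurable_Pair2[OF K_meas] by simp
    have "(\<integral>\<^sup>+y. ennreal (K x y * u y) \<partial>N)\<^sup>2
        \<le> (\<integral>\<^sup>+y. ennreal (K x y) \<partial>N) * (\<integral>\<^sup>+y. ennreal (K x y * (u y)\<^sup>2) \<partial>N)"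
      using K_nonneg u_nonneg \<open>K x \<in> borel_measurable N\<close> by (intro Cauchy_Schwarz_nn_integral_weighted) auto
    also have "\<dots> \<le> A * (\<integral>\<^sup>+y. ennreal (K x y * (u y)\<^sup>2) \<partial>N)"
      using \<open>x \<in> space M\<close> by (intro mult_right_mono rows) auto
    finally show "(\<integral>\<^sup>+y. ennreal (K x y * u y) \<partial>N)\<^sup>2 \<le> A * (\<integral>\<^sup>+y. ennreal (K x y * (u y)\<^sup>2) \<partial>N)" .
  qed
  also have "\<dots> = A * (\<integral>\<^sup>+y. (\<integral>\<^sup>+x. ennreal (K x y) * ennreal ((u y)\<^sup>2) \<partial>M) \<partial>N)"
    using K_nonneg by (simp add: nn_integral_cmult Fubini' ennreal_mult)
  also have "\<dots> \<le> A * (\<integral>\<^sup>+y. B * ennreal ((u y)\<^sup>2) \<partial>N)"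
    using columns by (intro mult_left_mono nn_integral_mono) (auto simp: nn_integral_multc intro: mult_right_mono)
  also have "\<dots> = A * B * (\<integral>\<^sup>+y. ennreal ((u y)\<^sup>2) \<partial>N)"
    by (simp add: nn_integral_cmult mult.assoc)
  finally show ?thesis .
qed

lemma borel_measurable_indicator_mult_norm:
  fixes f :: "'a \<Rightarrow> 'b::real_normed_vector"
  assumes "set_borel_measurable M A f"
  shows "(\<lambda>x. indicator A x * norm (f x)) \<in> borel_measurable M"
proof -
  have "(\<lambda>x. norm (indicator A x *\<^sub>R f x)) \<in> borel_measurable M"
    using assms unfolding set_borel_measurable_def by measurable
  then show ?thesis
    by (simp add: indicator_def if_distrib)
qed

lemma nn_integral_indicator_norm_square_finite:
  fixes f :: "'a \<Rightarrow> 'b::{banach, second_countable_topology}"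
  assumes "set_integrable M A (\<lambda>x. (norm (f x))\<^sup>2)"
  shows "(\<integral>\<^sup>+x. ennreal ((indicator A x * norm (f x))\<^sup>2) \<partial>M) < \<infinity>"
proof -
  have "(indicator A x * norm (f x))\<^sup>2 = norm (indicator A x *\<^sub>R (norm (f x))\<^sup>2)" for x
    by (simp add: indicator_def)
  then show ?thesis
    using assms unfolding set_integrable_def integrable_iff_bounded by simp
qed

section \<open>Pointwise bounds on the Green kernel\<close>

definition green_profile :: "real \<Rightarrow> real \<Rightarrow> real \<Rightarrow> real \<Rightarrow> real" where
  "green_profile \<alpha> c m n =
     (m * n) powr (-\<alpha>/2) * exp (- c * m powr (1 + \<alpha>)) * sinh (c * n powr (1 + \<alpha>))"

lemma green_profile_nonneg:
  assumes "0 \<le> c"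
  shows "0 \<le> green_profile \<alpha> c m n"
  using assms unfolding green_profile_def by simp

lemma jbr_powr_mult_green_profile_le_near_origin:
  fixes \<alpha> c m n :: real
  assumes \<alpha>: "0 < \<alpha>" "\<alpha> < 1" and c: "0 < c" and n: "0 < n" "n \<le> m" and m: "m \<le> 2"
  shows "jbr m powr (2 * \<alpha>) * green_profile \<alpha> c m n \<le> 10 * c"
proof -
  have "green_profile \<alpha> c m n
      = (m * n) powr (-\<alpha>/2) * (exp (- (c * m powr (1 + \<alpha>))) * sinh (c * n powr (1 + \<alpha>)))"
    by (simp add: green_profile_def)
  also have "\<dots> \<le> (m * n) powr (-\<alpha>/2) * (c * n powr (1 + \<alpha>))"
    using c n \<alpha> by (intro mult_left_mono exp_mult_sinh_le mult_left_mono powr_mono2) auto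
  also have "\<dots> = c * m powr (-\<alpha>/2) * n powr (1 + \<alpha>/2)"
    using n by (simp add: powr_mult powr_add[symmetric] add.commute)
  also have "\<dots> \<le> c * m powr (-\<alpha>/2) * m powr (1 + \<alpha>/2)"
    using n \<alpha> c by (intro mult_left_mono powr_mono2) auto
  also have "\<dots> = c * m"
    using n by (simp add: mult.assoc powr_add[symmetric])
  also have "\<dots> \<le> 2 * c"
    using c m by simp
  finally have "green_profile \<alpha> c m n \<le> 2 * c" .
  moreover have "jbr m powr (2 * \<alpha>) \<le> 5"
    using jbr_powr_le_1_plus_power2[of \<alpha> m] power_mono[OF m, of 2] n \<alpha> by simp
  ultimately show ?thesis
    using mult_mono[of "jbr m powr (2 * \<alpha>)" 5 "green_profile \<alpha> c m n" "2 * c"]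
      green_profile_nonneg[of c] c by simp
qed

lemma exp_mult_sinh_le_near_diagonal:
  fixes \<alpha> c m n x :: real
  assumes \<alpha>: "0 < \<alpha>" "\<alpha> \<le> 1" and c: "0 \<le> c" and x: "0 < x" "x / 2 \<le> n" and nm: "n \<le> m"
  shows "exp (- c * m powr (1 + \<alpha>)) * sinh (c * n powr (1 + \<alpha>)) \<le> exp (- (c/2) * x powr \<alpha> * (m - n)) / 2"
proof -
  have "x powr \<alpha> / 2 \<le> x powr \<alpha> / 2 powr \<alpha>"
    using \<alpha> two_powr_le_two[of \<alpha>] by (intro divide_left_mono) auto
  also have "\<dots> = (x / 2) powr \<alpha>"
    using x by (simp add: powr_divide)
  also have "\<dots> \<le> n powr \<alpha>"
    using x \<alpha> by (intro powr_mono2) auto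
  finally have "x powr \<alpha> / 2 * (m - n) \<le> n powr \<alpha> * (m - n)"
    using nm by (intro mult_right_mono) auto
  also have "\<dots> \<le> m powr (1 + \<alpha>) - n powr (1 + \<alpha>)"
    using x nm by (intro powr_mult_diff_le_diff_powr \<alpha>) auto
  finally have gap: "c * (x powr \<alpha> / 2 * (m - n)) \<le> c * (m powr (1 + \<alpha>) - n powr (1 + \<alpha>))"
    using c by (intro mult_left_mono) auto
  have "exp (- c * m powr (1 + \<alpha>)) * sinh (c * n powr (1 + \<alpha>))
      \<le> exp (c * n powr (1 + \<alpha>) - c * m powr (1 + \<alpha>)) / 2"
    using exp_mult_sinh_le_half_exp by simp
  also have "\<dots> \<le> exp (- (c/2) * x powr \<alpha> * (m - n)) / 2"
    using gap by (simp add: algebra_simps)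
  finally show ?thesis .
qed

lemma jbr_powr_mult_powr_le_near_diagonal:
  fixes \<alpha> m n x :: real
  assumes \<alpha>: "0 < \<alpha>" "\<alpha> \<le> 1" and m: "1 \<le> m" and n: "m / 2 \<le> n" "n \<le> m" and x: "n \<le> x" "x \<le> m"
  shows "jbr m powr (2 * \<alpha>) * (m * n) powr (-\<alpha>/2) \<le> 16 * x powr \<alpha>"
proof -
  have x0: "0 < x" and xn: "x / 2 \<le> n" and n0: "0 < n"
    using m n x by auto
  have two_powr: "(2::real) powr \<alpha> \<le> 2"
    using \<alpha> by (intro two_powr_le_two) auto
  have "(m * n) powr (-\<alpha>/2) \<le> (n * n) powr (-\<alpha>/2)"
    using n0 n \<alpha> by (intro powr_mono2' mult_right_mono) auto
  also have "\<dots> = n powr (-\<alpha>)"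
    using n0 by (simp add: powr_mult powr_add[symmetric])
  also have "\<dots> \<le> (x / 2) powr (-\<alpha>)"
    using \<alpha> xn x0 by (intro powr_mono2') auto
  also have "\<dots> = 2 powr \<alpha> * x powr (-\<alpha>)"
    using x0 by (simp add: powr_divide powr_minus_divide)
  also have "\<dots> \<le> 2 * x powr (-\<alpha>)"
    using two_powr by (intro mult_right_mono) auto
  finally have prefactor: "(m * n) powr (-\<alpha>/2) \<le> 2 * x powr (-\<alpha>)" .
  have "jbr m powr (2 * \<alpha>) \<le> 2 * m powr (2 * \<alpha>)"
    using \<alpha> m by (intro jbr_powr_le_2_mult_powr) auto
  also have "\<dots> \<le> 2 * (2 * x) powr (2 * \<alpha>)"
    using x \<alpha> n by (intro mult_left_mono powr_mono2) auto
  also have "\<dots> = 2 * (2 powr \<alpha>)\<^sup>2 * x powr (2 * \<alpha>)"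
    using x0 by (simp add: powr_mult power2_eq_square flip: powr_add)
  also have "\<dots> \<le> 2 * 2\<^sup>2 * x powr (2 * \<alpha>)"
    using two_powr by (intro mult_right_mono mult_left_mono power_mono) auto
  finally have weight: "jbr m powr (2 * \<alpha>) \<le> 8 * x powr (2 * \<alpha>)"
    by simp
  have "jbr m powr (2 * \<alpha>) * (m * n) powr (-\<alpha>/2) \<le> (8 * x powr (2 * \<alpha>)) * (2 * x powr (-\<alpha>))"
    by (intro mult_mono weight prefactor) auto
  also have "\<dots> = 16 * x powr \<alpha>"
    using x0 by (simp add: powr_add[symmetric])
  finally show ?thesis .
qed

lemma jbr_powr_mult_green_profile_le_near_diagonal:
  fixes \<alpha> c m n x :: real
  assumes \<alpha>: "0 < \<alpha>" "\<alpha> < 1" and c: "0 < c" and m: "1 \<le> m"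
    and n: "m / 2 \<le> n" "n \<le> m" and x: "n \<le> x" "x \<le> m"
  shows "jbr m powr (2 * \<alpha>) * green_profile \<alpha> c m n
     \<le> 8 * (x powr \<alpha> * exp (- (c/2) * x powr \<alpha> * (m - n)))"
proof -
  have "jbr m powr (2 * \<alpha>) * green_profile \<alpha> c m n
      = (jbr m powr (2 * \<alpha>) * (m * n) powr (-\<alpha>/2))
        * (exp (- c * m powr (1 + \<alpha>)) * sinh (c * n powr (1 + \<alpha>)))"
    by (simp add: green_profile_def mult.assoc)
  also have "\<dots> \<le> (16 * x powr \<alpha>) * (exp (- (c/2) * x powr \<alpha> * (m - n)) / 2)"
    using \<alpha> c m n x
    by (intro mult_mono jbr_powr_mult_powr_le_near_diagonal exp_mult_sinh_le_near_diagonal) auto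
  finally show ?thesis
    by simp
qed

lemma green_profile_le_off_diagonal:
  fixes \<alpha> c m n :: real
  assumes \<alpha>: "0 < \<alpha>" and c: "0 < c" and n: "0 < n" and m: "1 \<le> m" and nm: "n \<le> m / 2"
  shows "green_profile \<alpha> c m n \<le> (c + 1) * exp (- (c/2) * m)"
proof -
  define A where "A = c * n powr (1 + \<alpha>)"
  have A0: "0 \<le> A"
    using c by (simp add: A_def)
  have small: "n powr (-\<alpha>/2) * (exp (- A) * sinh A) \<le> c + 1"
  proof (cases "n \<le> 1")
    case True
    have "n powr (-\<alpha>/2) * (exp (- A) * sinh A) \<le> n powr (-\<alpha>/2) * A"
      using A0 by (intro mult_left_mono exp_mult_sinh_le) auto
    also have "\<dots> = c * n powr (1 + \<alpha>/2)"
      using n by (simp add: A_def powr_add[symmetric] add.commute)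
    also have "\<dots> \<le> c"
      using True n \<alpha> c by (simp add: mult_left_le powr_le1)
    finally show ?thesis
      by simp
  next
    case False
    then have "n powr (-\<alpha>/2) \<le> 1"
      using \<alpha> powr_mono2'[of "-\<alpha>/2" 1 n] by simp
    moreover have "exp (- A) * sinh A \<le> 1/2"
      using exp_mult_sinh_le_half_exp[of A A] by simp
    ultimately have "n powr (-\<alpha>/2) * (exp (- A) * sinh A) \<le> 1 * (1/2)"
      using A0 by (intro mult_mono) auto
    then show ?thesis
      using c by simp
  qed
  have "m powr (-\<alpha>/2) \<le> 1"
    using m \<alpha> powr_mono2'[of "-\<alpha>/2" 1 m] by simp
  then have prefactor: "(m * n) powr (-\<alpha>/2) * (exp (- A) * sinh A) \<le> c + 1"
    using small mult_mono[of "m powr (-\<alpha>/2)" 1 "n powr (-\<alpha>/2) * (exp (- A) * sinh A)" "c + 1"] n m A0 c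
    by (simp add: powr_mult mult.assoc)
  have "m \<le> m powr (1 + \<alpha>)"
    using m \<alpha> powr_mono[of 1 "1 + \<alpha>" m] by simp
  moreover have "A \<le> c * (m powr (1 + \<alpha>) / 2)"
    unfolding A_def using powr_le_half_powr[OF \<alpha> n nm] c by (intro mult_left_mono) auto
  ultimately have "A - c * m powr (1 + \<alpha>) \<le> - (c/2) * m"
    using c mult_left_mono[of m "m powr (1 + \<alpha>)" c] by linarith
  then have "exp (A - c * m powr (1 + \<alpha>)) \<le> exp (- (c/2) * m)"
    by simp
  moreover have "green_profile \<alpha> c m n = ((m * n) powr (-\<alpha>/2) * (exp (- A) * sinh A)) * exp (A - c * m powr (1 + \<alpha>))"
    by (simp add: green_profile_def A_def exp_diff exp_minus field_simps)
  ultimately show ?thesis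
    using prefactor A0 c by (simp add: mult_mono)
qed

lemma jbr_powr_mult_green_profile_le_off_diagonal:
  fixes \<alpha> c m n :: real
  assumes \<alpha>: "0 < \<alpha>" "\<alpha> < 1" and c: "0 < c" and n: "0 < n" and m: "1 \<le> m" and nm: "n \<le> m / 2"
  shows "jbr m powr (2 * \<alpha>) * green_profile \<alpha> c m n \<le> 128 * (c + 1) / c\<^sup>2 * exp (- (c/4) * m)"
proof -
  have "jbr m powr (2 * \<alpha>) \<le> 2 * m\<^sup>2"
    using jbr_powr_le_1_plus_power2[of \<alpha> m] \<alpha> one_le_power[OF m, of 2] by linarith
  then have "jbr m powr (2 * \<alpha>) * green_profile \<alpha> c m n \<le> (2 * m\<^sup>2) * ((c + 1) * exp (- (c/2) * m))"
    using green_profile_le_off_diagonal[OF \<alpha>(1) c n m nm] green_profile_nonneg[of c] c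
    by (intro mult_mono) auto
  also have "\<dots> = 2 * (c + 1) * (m\<^sup>2 * exp (- (c/2) * m))"
    by simp
  also have "\<dots> \<le> 2 * (c + 1) * (64 / c\<^sup>2 * exp (- (c/4) * m))"
    using power2_mult_exp_le[of c m] c m by (intro mult_left_mono) auto
  also have "\<dots> = 128 * (c + 1) / c\<^sup>2 * exp (- (c/4) * m)"
    by simp
  finally show ?thesis .
qed

lemma jbr_powr_mult_green_profile_le:
  fixes \<alpha> c x y :: real
  assumes \<alpha>: "0 < \<alpha>" "\<alpha> < 1" and c: "0 < c" and x: "0 < x" and y: "0 < y"
  shows "jbr (max x y) powr (2 * \<alpha>) * green_profile \<alpha> c (max x y) (min x y)
    \<le> 10 * c * indicator {..2} y + 8 * (x powr \<alpha> * exp (- (c/2) * x powr \<alpha> * \<bar>x - y\<bar>))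
       + 128 * (c + 1) / c\<^sup>2 * exp (- (c/4) * y)"
    (is "?lhs \<le> ?near_origin + ?near_diagonal + ?off_diagonal")
proof -
  define m where "m = max x y"
  define n where "n = min x y"
  have n: "0 < n" "n \<le> m" and mn: "\<bar>x - y\<bar> = m - n" "y \<le> m" "n \<le> x" "x \<le> m"
    using x y by (auto simp: m_def n_def)
  have "0 \<le> ?near_origin" "0 \<le> ?near_diagonal" "0 \<le> ?off_diagonal"
    using c by auto
  moreover consider "m \<le> 2" | "1 \<le> m" "m / 2 \<le> n" | "1 \<le> m" "n \<le> m / 2"
    by linarith
  then have "?lhs \<le> ?near_origin \<or> ?lhs \<le> ?near_diagonal \<or> ?lhs \<le> ?off_diagonal"
  proof cases
    case 1
    then show ?thesis
      using jbr_powr_mult_green_profile_le_near_origin[OF \<alpha> c n] mn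
      by (simp add: m_def n_def)
  next
    case 2
    then show ?thesis
      using jbr_powr_mult_green_profile_le_near_diagonal[OF \<alpha> c 2(1) 2(2) n(2), of x] mn
      by (simp add: m_def n_def)
  next
    case 3
    have "128 * (c + 1) / c\<^sup>2 * exp (- (c/4) * m) \<le> ?off_diagonal"
      using c mn by (intro mult_left_mono) auto
    then show ?thesis
      using jbr_powr_mult_green_profile_le_off_diagonal[OF \<alpha> c n(1) 3]
      by (simp add: m_def n_def)
  qed
  ultimately show ?thesis
    by linarith
qed

lemma Gk_commute: "Gk \<alpha> k r \<rho> = Gk \<alpha> k \<rho> r"
  unfolding Gk_def by (auto simp: mult.commute)

lemma Gk_eq_green_profile:
  assumes \<alpha>: "0 < \<alpha>" and k: "k \<noteq> 0" and \<rho>: "0 < \<rho>" "\<rho> \<le> r"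
  shows "Gk \<alpha> k r \<rho> = green_profile \<alpha> (\<bar>real_of_int k\<bar> / (1 + \<alpha>)) r \<rho> / \<bar>real_of_int k\<bar>"
proof -
  define K where "K = \<bar>real_of_int k\<bar>"
  have K: "K > 0"
    using k by (simp add: K_def)
  have "sqrt (pi * (1 + \<alpha>) / (2 * K)) * sqrt (2 * (1 + \<alpha>) / (pi * K)) = sqrt (((1 + \<alpha>) / K)\<^sup>2)"
    unfolding real_sqrt_mult[symmetric]
    using K pi_gt_zero by (intro arg_cong[where f=sqrt]) (simp add: field_simps power2_eq_square)
  also have "\<dots> = (1 + \<alpha>) / K"
    using K \<alpha> by simp
  finally have constants: "sqrt (pi * (1 + \<alpha>) / (2 * K)) * sqrt (2 * (1 + \<alpha>) / (pi * K)) / (1 + \<alpha>) = 1 / K"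
    using \<alpha> by simp
  have powers: "r powr (-\<alpha>/2) * \<rho> powr (-\<alpha>/2) = (r * \<rho>) powr (-\<alpha>/2)"
    using \<rho> by (simp add: powr_mult)
  have "Gk \<alpha> k r \<rho> = sqrt (pi * (1 + \<alpha>) / (2 * K)) * sqrt (2 * (1 + \<alpha>) / (pi * K)) / (1 + \<alpha>)
      * (r powr (-\<alpha>/2) * \<rho> powr (-\<alpha>/2) * exp (- (K / (1 + \<alpha>)) * r powr (1 + \<alpha>))
         * sinh ((K / (1 + \<alpha>)) * \<rho> powr (1 + \<alpha>)))"
    using \<rho> unfolding Gk_def Phi_def Fk_def K_def by (auto simp: ac_simps)
  also have "\<dots> = green_profile \<alpha> (K / (1 + \<alpha>)) r \<rho> / K"
    unfolding constants powers green_profile_def by simp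
  finally show ?thesis
    unfolding K_def .
qed

lemma borel_measurable_Gk[measurable (raw)]:
  assumes [measurable]: "f \<in> borel_measurable M" "g \<in> borel_measurable M"
  shows "(\<lambda>z. Gk \<alpha> k (f z) (g z)) \<in> borel_measurable M"
  unfolding Gk_def Phi_def Fk_def by measurable

section \<open>The weighted kernel\<close>

definition Gk_weighted :: "real \<Rightarrow> int \<Rightarrow> real \<Rightarrow> real \<Rightarrow> real" where
  "Gk_weighted \<alpha> k x y = indicator {0<..} x * indicator {0<..} y
     * max (jbr x powr (2 * \<alpha>)) (jbr y powr (2 * \<alpha>)) * \<bar>Gk \<alpha> k x y\<bar>"

lemma borel_measurable_Gk_weighted[measurable (raw)]:
  assumes [measurable]: "f \<in> borel_measurable M" "g \<in> borel_measurable M"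
  shows "(\<lambda>z. Gk_weighted \<alpha> k (f z) (g z)) \<in> borel_measurable M"
  unfolding Gk_weighted_def by measurable

lemma Gk_weighted_commute: "Gk_weighted \<alpha> k x y = Gk_weighted \<alpha> k y x"
  unfolding Gk_weighted_def by (simp add: Gk_commute[of \<alpha> k x y] max.commute ac_simps)

lemma Gk_weighted_nonneg: "0 \<le> Gk_weighted \<alpha> k x y"
  unfolding Gk_weighted_def by (simp add: le_max_iff_disj)

lemma jbr_powr_mult_abs_Gk_le_Gk_weighted:
  assumes "0 < x" "0 < y"
  shows "jbr x powr (2 * \<alpha>) * \<bar>Gk \<alpha> k x y\<bar> \<le> Gk_weighted \<alpha> k x y"
  unfolding Gk_weighted_def using assms by (simp add: mult_right_mono)

lemma abs_Gk_le_Gk_weighted: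
  assumes "0 \<le> \<alpha>" "0 < x" "0 < y"
  shows "\<bar>Gk \<alpha> k x y\<bar> \<le> Gk_weighted \<alpha> k x y"
  using jbr_powr_mult_abs_Gk_le_Gk_weighted[of x y \<alpha> k] jbr_powr_ge_1[of "2 * \<alpha>" x] assms
    mult_right_mono[of 1 "jbr x powr (2 * \<alpha>)" "\<bar>Gk \<alpha> k x y\<bar>"]
  by simp

lemma Gk_weighted_eq_green_profile:
  assumes \<alpha>: "0 < \<alpha>" and k: "k \<noteq> 0" and x: "0 < x" and y: "0 < y"
  shows "Gk_weighted \<alpha> k x y
    = jbr (max x y) powr (2 * \<alpha>) * green_profile \<alpha> (\<bar>real_of_int k\<bar> / (1 + \<alpha>)) (max x y) (min x y) / \<bar>real_of_int k\<bar>"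
proof -
  have weight: "max (jbr x powr (2 * \<alpha>)) (jbr y powr (2 * \<alpha>)) = jbr (max x y) powr (2 * \<alpha>)"
    using x y \<alpha> by (intro max_jbr_powr) auto
  have "Gk \<alpha> k x y = Gk \<alpha> k (max x y) (min x y)"
    by (simp add: max_def min_def Gk_commute)
  also have "\<dots> = green_profile \<alpha> (\<bar>real_of_int k\<bar> / (1 + \<alpha>)) (max x y) (min x y) / \<bar>real_of_int k\<bar>"
    using x y by (intro Gk_eq_green_profile \<alpha> k) auto
  finally have "\<bar>Gk \<alpha> k x y\<bar> = green_profile \<alpha> (\<bar>real_of_int k\<bar> / (1 + \<alpha>)) (max x y) (min x y) / \<bar>real_of_int k\<bar>"
    using \<alpha> green_profile_nonneg[of "\<bar>real_of_int k\<bar> / (1 + \<alpha>)"] by simp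
  then show ?thesis
    unfolding Gk_weighted_def weight using x y by simp
qed

lemma Gk_weighted_le:
  assumes \<alpha>: "0 < \<alpha>" "\<alpha> < 1" and k: "k \<noteq> 0" and x: "0 < x"
  defines "c \<equiv> \<bar>real_of_int k\<bar> / (1 + \<alpha>)"
  shows "Gk_weighted \<alpha> k x y \<le> (10 * c * indicator {0<..2} y
      + 8 * (x powr \<alpha> * exp (- (c/2) * x powr \<alpha> * \<bar>x - y\<bar>))
      + 128 * (c + 1) / c\<^sup>2 * (indicator {0..} y * exp (- (c/4) * y))) / \<bar>real_of_int k\<bar>"
proof (cases "0 < y")
  case True
  have c: "c > 0"
    using \<alpha> k by (simp add: c_def)
  have "jbr (max x y) powr (2 * \<alpha>) * green_profile \<alpha> c (max x y) (min x y)
      \<le> 10 * c * indicator {..2} y + 8 * (x powr \<alpha> * exp (- (c/2) * x powr \<alpha> * \<bar>x - y\<bar>))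
        + 128 * (c + 1) / c\<^sup>2 * exp (- (c/4) * y)"
    by (rule jbr_powr_mult_green_profile_le[OF \<alpha> c x True])
  also have "\<dots> = 10 * c * indicator {0<..2} y + 8 * (x powr \<alpha> * exp (- (c/2) * x powr \<alpha> * \<bar>x - y\<bar>))
        + 128 * (c + 1) / c\<^sup>2 * (indicator {0..} y * exp (- (c/4) * y))"
    using True by (simp add: indicator_def)
  finally show ?thesis
    unfolding Gk_weighted_eq_green_profile[OF \<alpha>(1) k x True] c_def
    by (intro divide_right_mono) auto
next
  case False
  have "c > 0"
    using \<alpha> k by (simp add: c_def)
  with False show ?thesis
    by (simp add: Gk_weighted_def)
qed

lemma Gk_weighted_bounded:
  assumes \<alpha>: "0 < \<alpha>" "\<alpha> < 1" and k: "k \<noteq> 0"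
  obtains B where "\<And>y. Gk_weighted \<alpha> k x y \<le> B"
proof (cases "0 < x")
  case True
  define c where "c = \<bar>real_of_int k\<bar> / (1 + \<alpha>)"
  have c: "0 < c"
    using \<alpha> k by (simp add: c_def)
  have "Gk_weighted \<alpha> k x y \<le> (10 * c + 8 * x powr \<alpha> + 128 * (c + 1) / c\<^sup>2) / \<bar>real_of_int k\<bar>" for y
  proof -
    have "exp (- (c/2) * x powr \<alpha> * \<bar>x - y\<bar>) \<le> 1" "indicator {0..} y * exp (- (c/4) * y) \<le> 1"
      using c by (auto simp: indicator_def mult_nonneg_nonneg)
    then have "10 * c * indicator {0<..2} y + 8 * (x powr \<alpha> * exp (- (c/2) * x powr \<alpha> * \<bar>x - y\<bar>))
        + 128 * (c + 1) / c\<^sup>2 * (indicator {0..} y * exp (- (c/4) * y))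
      \<le> 10 * c + 8 * x powr \<alpha> + 128 * (c + 1) / c\<^sup>2"
      using c by (intro add_mono mult_left_mono mult_left_le) (auto simp: indicator_def)
    then show ?thesis
      using Gk_weighted_le[OF \<alpha> k True, of y] unfolding c_def[symmetric]
      by (meson abs_ge_zero divide_right_mono order_trans)
  qed
  then show ?thesis
    using that by blast
next
  case False
  then show ?thesis
    using that[of 0] by (simp add: Gk_weighted_def)
qed

lemma nn_integral_Gk_weighted_majorant_le:
  fixes c s x :: real
  assumes c: "0 < c" and s: "0 < s"
  shows "(\<integral>\<^sup>+y. ennreal (10 * c * indicator {0<..2} y + 8 * (s * exp (- (c/2 * s) * \<bar>x - y\<bar>))
      + 128 * (c + 1) / c\<^sup>2 * (indicator {0..} y * exp (- (c/4) * y))) \<partial>lborel)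
    \<le> ennreal (10 * c) * 2 + 8 * ennreal (2 / (c/2)) + ennreal (128 * (c + 1) / c\<^sup>2) * ennreal (1 / (c/4))"
proof -
  define C3 where "C3 = 128 * (c + 1) / c\<^sup>2"
  have C3: "0 \<le> C3"
    using c by (simp add: C3_def)
  define b1 where "b1 y = 10 * c * indicator {0<..2} y" for y :: real
  define b2 where "b2 y = 8 * (s * exp (- (c/2 * s) * \<bar>x - y\<bar>))" for y
  define b3 where "b3 y = C3 * (indicator {0..} y * exp (- (c/4) * y))" for y :: real
  have b_nonneg: "0 \<le> b1 y" "0 \<le> b2 y" "0 \<le> b3 y" for y
    using c s C3 by (simp_all add: b1_def b2_def b3_def)
  have [measurable]: "b1 \<in> borel_measurable borel" "b2 \<in> borel_measurable borel"
    "b3 \<in> borel_measurable borel"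
    unfolding b1_def b2_def b3_def by simp_all
  have "(\<integral>\<^sup>+y. ennreal (b1 y + b2 y + b3 y) \<partial>lborel)
      = (\<integral>\<^sup>+y. ennreal (b1 y) \<partial>lborel) + (\<integral>\<^sup>+y. ennreal (b2 y) \<partial>lborel) + (\<integral>\<^sup>+y. ennreal (b3 y) \<partial>lborel)"
    using b_nonneg by (simp add: nn_integral_add)
  also have "(\<integral>\<^sup>+y. ennreal (b1 y) \<partial>lborel) = ennreal (10 * c) * 2"
    using c by (simp add: b1_def ennreal_mult nn_integral_cmult ennreal_indicator)
  also have "(\<integral>\<^sup>+y. ennreal (b2 y) \<partial>lborel) = 8 * (\<integral>\<^sup>+y. ennreal (s * exp (- (c/2 * s) * \<bar>x - y\<bar>)) \<partial>lborel)"
    using s by (simp add: b2_def ennreal_mult nn_integral_cmult)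
  also have "(\<integral>\<^sup>+y. ennreal (b3 y) \<partial>lborel)
      = (\<integral>\<^sup>+y. ennreal C3 * ennreal (indicator {0..} y * exp (- (c/4) * y)) \<partial>lborel)"
    unfolding b3_def by (intro nn_integral_cong ennreal_mult' C3)
  also have "\<dots> = ennreal C3 * ennreal (1 / (c/4))"
    using c nn_integral_exp_neg_halfline[of "c/4"] by (simp add: nn_integral_cmult)
  also have "ennreal (10 * c) * 2 + 8 * (\<integral>\<^sup>+y. ennreal (s * exp (- (c/2 * s) * \<bar>x - y\<bar>)) \<partial>lborel)
      + ennreal C3 * ennreal (1 / (c/4))
    \<le> ennreal (10 * c) * 2 + 8 * ennreal (2 / (c/2)) + ennreal C3 * ennreal (1 / (c/4))"
    using nn_integral_scaled_exp_neg_dist_le[of "c/2" s x] c s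
    by (intro add_mono mult_left_mono order.refl) auto
  finally show ?thesis
    unfolding b1_def b2_def b3_def C3_def .
qed

lemma nn_integral_Gk_weighted_le:
  assumes \<alpha>: "0 < \<alpha>" "\<alpha> < 1" and k: "k \<noteq> 0" and x: "0 < x"
  defines "c \<equiv> \<bar>real_of_int k\<bar> / (1 + \<alpha>)"
  shows "(\<integral>\<^sup>+y. ennreal (Gk_weighted \<alpha> k x y) \<partial>lborel)
    \<le> (ennreal (10 * c) * 2 + 8 * ennreal (2 / (c/2))
      + ennreal (128 * (c + 1) / c\<^sup>2) * ennreal (1 / (c/4))) / ennreal \<bar>real_of_int k\<bar>"
proof -
  define b where "b y = 10 * c * indicator {0<..2} y + 8 * (x powr \<alpha> * exp (- (c/2 * x powr \<alpha>) * \<bar>x - y\<bar>))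
      + 128 * (c + 1) / c\<^sup>2 * (indicator {0..} y * exp (- (c/4) * y))" for y :: real
  have c: "0 < c"
    using \<alpha> k by (simp add: c_def)
  have [measurable]: "b \<in> borel_measurable borel"
    unfolding b_def by simp
  have "(\<integral>\<^sup>+y. ennreal (Gk_weighted \<alpha> k x y) \<partial>lborel) \<le> (\<integral>\<^sup>+y. ennreal (b y) / ennreal \<bar>real_of_int k\<bar> \<partial>lborel)"
  proof (rule nn_integral_mono)
    fix y
    have "0 \<le> b y"
      using c by (simp add: b_def)
    moreover have "Gk_weighted \<alpha> k x y \<le> b y / \<bar>real_of_int k\<bar>"
      using Gk_weighted_le[OF \<alpha> k x, of y] unfolding b_def c_def by (simp add: mult.assoc)
    ultimately show "ennreal (Gk_weighted \<alpha> k x y) \<le> ennreal (b y) / ennreal \<bar>real_of_int k\<bar>"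
      using k by (simp add: divide_ennreal ennreal_leI)
  qed
  also have "\<dots> = (\<integral>\<^sup>+y. ennreal (b y) \<partial>lborel) / ennreal \<bar>real_of_int k\<bar>"
    by (simp add: nn_integral_divide)
  also have "\<dots> \<le> (ennreal (10 * c) * 2 + 8 * ennreal (2 / (c/2))
      + ennreal (128 * (c + 1) / c\<^sup>2) * ennreal (1 / (c/4))) / ennreal \<bar>real_of_int k\<bar>"
    unfolding b_def using c x by (intro divide_right_mono_ennreal nn_integral_Gk_weighted_majorant_le) auto
  finally show ?thesis .
qed

lemma nn_integral_Gk_weighted_bounded:
  assumes \<alpha>: "0 < \<alpha>" "\<alpha> < 1" and k: "k \<noteq> 0"
  obtains C :: ennreal where "C < \<infinity>"
    and "\<And>x. (\<integral>\<^sup>+y. ennreal (Gk_weighted \<alpha> k x y) \<partial>lborel) \<le> C"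
    and "\<And>y. (\<integral>\<^sup>+x. ennreal (Gk_weighted \<alpha> k x y) \<partial>lborel) \<le> C"
proof -
  define c where "c = \<bar>real_of_int k\<bar> / (1 + \<alpha>)"
  define C where "C = (ennreal (10 * c) * 2 + 8 * ennreal (2 / (c/2))
    + ennreal (128 * (c + 1) / c\<^sup>2) * ennreal (1 / (c/4))) / ennreal \<bar>real_of_int k\<bar>"
  have rows: "(\<integral>\<^sup>+y. ennreal (Gk_weighted \<alpha> k x y) \<partial>lborel) \<le> C" for x
    using nn_integral_Gk_weighted_le[OF \<alpha> k, of x] unfolding C_def c_def
    by (cases "0 < x") (simp_all add: Gk_weighted_def)
  moreover have "(\<integral>\<^sup>+x. ennreal (Gk_weighted \<alpha> k x y) \<partial>lborel) \<le> C" for y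
    using rows[of y] by (simp only: Gk_weighted_commute[of \<alpha> k _ y])
  moreover have "C < \<infinity>"
    using k by (simp add: C_def ennreal_mult_less_top divide_ennreal_def inverse_ennreal)
  ultimately show ?thesis
    using that by blast
qed

lemma nn_integral_Gk_weighted_mult_finite:
  assumes \<alpha>: "0 < \<alpha>" "\<alpha> < 1" and k: "k \<noteq> 0"
    and [measurable]: "u \<in> borel_measurable lborel" and u_nonneg: "\<And>y. 0 \<le> u y"
    and u_L2: "(\<integral>\<^sup>+y. ennreal ((u y)\<^sup>2) \<partial>lborel) < \<infinity>"
  shows "(\<integral>\<^sup>+y. ennreal (Gk_weighted \<alpha> k x y * u y) \<partial>lborel) < \<infinity>"
proof -
  obtain C where C: "C < \<infinity>" and row: "(\<integral>\<^sup>+y. ennreal (Gk_weighted \<alpha> k x y) \<partial>lborel) \<le> C"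
    using nn_integral_Gk_weighted_bounded[OF \<alpha> k] by metis
  obtain B where B: "\<And>y. Gk_weighted \<alpha> k x y \<le> B"
    using Gk_weighted_bounded[OF \<alpha> k] by metis
  have "(\<integral>\<^sup>+y. ennreal (Gk_weighted \<alpha> k x y * u y) \<partial>lborel)\<^sup>2
      \<le> (\<integral>\<^sup>+y. ennreal (Gk_weighted \<alpha> k x y) \<partial>lborel) * (\<integral>\<^sup>+y. ennreal (Gk_weighted \<alpha> k x y * (u y)\<^sup>2) \<partial>lborel)"
    using Gk_weighted_nonneg u_nonneg by (intro Cauchy_Schwarz_nn_integral_weighted) auto
  also have "\<dots> \<le> C * (\<integral>\<^sup>+y. ennreal B * ennreal ((u y)\<^sup>2) \<partial>lborel)"
    using row B Gk_weighted_nonneg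
    by (intro mult_mono nn_integral_mono) (auto intro!: ennreal_leI mult_right_mono simp flip: ennreal_mult'')
  also have "\<dots> < \<infinity>"
    using C u_L2 by (simp add: nn_integral_cmult ennreal_mult_less_top)
  finally show ?thesis
    by (simp add: power_less_top_ennreal)
qed

section \<open>The weighted range of the integral operator\<close>

lemma indicator_scaleR_Gk_mult:
  "indicator {0<..} \<rho> *\<^sub>R (complex_of_real (Gk \<alpha> k r \<rho>) * f \<rho>)
    = complex_of_real (Gk \<alpha> k r \<rho>) * (indicator {0<..} \<rho> *\<^sub>R f \<rho>)"
  by (simp add: indicator_def)

lemma borel_measurable_RG:
  assumes "set_borel_measurable lborel {0<..} f"
  shows "RG \<alpha> k f \<in> borel_measurable lborel"
proof -
  have [measurable]: "(\<lambda>\<rho>. indicator {0<..} \<rho> *\<^sub>R f \<rho>) \<in> borel_measurable lborel"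
    using assms unfolding set_borel_measurable_def .
  have "(\<lambda>r. LINT \<rho>|lborel. complex_of_real (Gk \<alpha> k r \<rho>) * (indicator {0<..} \<rho> *\<^sub>R f \<rho>))
      \<in> borel_measurable lborel"
    by (rule lborel.borel_measurable_lebesgue_integral) measurable
  then show ?thesis
    unfolding RG_def set_lebesgue_integral_def indicator_scaleR_Gk_mult .
qed

lemma set_integrable_Gk_mult:
  assumes \<alpha>: "0 < \<alpha>" "\<alpha> < 1" and k: "k \<noteq> 0" and r: "0 < r"
    and f_meas: "set_borel_measurable lborel {0<..} f"
    and f_L2: "set_integrable lborel {0<..} (\<lambda>x. (cmod (f x))\<^sup>2)"
  shows "set_integrable lborel {0<..} (\<lambda>\<rho>. complex_of_real (Gk \<alpha> k r \<rho>) * f \<rho>)"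
proof -
  have [measurable]: "(\<lambda>\<rho>. indicator {0<..} \<rho> *\<^sub>R f \<rho>) \<in> borel_measurable lborel"
    using f_meas unfolding set_borel_measurable_def .
  have meas: "(\<lambda>\<rho>. indicator {0<..} \<rho> *\<^sub>R (complex_of_real (Gk \<alpha> k r \<rho>) * f \<rho>)) \<in> borel_measurable lborel"
    unfolding indicator_scaleR_Gk_mult by measurable
  have "(\<integral>\<^sup>+\<rho>. ennreal (norm (indicator {0<..} \<rho> *\<^sub>R (complex_of_real (Gk \<alpha> k r \<rho>) * f \<rho>))) \<partial>lborel)
      \<le> (\<integral>\<^sup>+\<rho>. ennreal (Gk_weighted \<alpha> k r \<rho> * (indicator {0<..} \<rho> * cmod (f \<rho>))) \<partial>lborel)"
    using abs_Gk_le_Gk_weighted[of \<alpha> r _ k] \<alpha> r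
    by (intro nn_integral_mono ennreal_leI) (auto simp: norm_mult indicator_def mult_right_mono)
  also have "\<dots> < \<infinity>"
    using borel_measurable_indicator_mult_norm[OF f_meas] nn_integral_indicator_norm_square_finite[OF f_L2]
    by (intro nn_integral_Gk_weighted_mult_finite[OF \<alpha> k]) auto
  finally show ?thesis
    using meas unfolding set_integrable_def integrable_iff_bounded by simp
qed

lemma jbr_powr_norm_RG_le:
  assumes \<alpha>: "0 < \<alpha>" "\<alpha> < 1" and k: "k \<noteq> 0" and r: "0 < r"
    and f_meas: "set_borel_measurable lborel {0<..} f"
    and f_L2: "set_integrable lborel {0<..} (\<lambda>x. (cmod (f x))\<^sup>2)"
  shows "ennreal (jbr r powr (2 * \<alpha>) * cmod (RG \<alpha> k f r))
    \<le> (\<integral>\<^sup>+\<rho>. ennreal (Gk_weighted \<alpha> k r \<rho> * (indicator {0<..} \<rho> * cmod (f \<rho>))) \<partial>lborel)"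
proof -
  define h where "h \<rho> = indicator {0<..} \<rho> *\<^sub>R (complex_of_real (Gk \<alpha> k r \<rho>) * f \<rho>)" for \<rho>
  have "integrable lborel h"
    using set_integrable_Gk_mult[OF \<alpha> k r f_meas f_L2] unfolding set_integrable_def h_def .
  have "ennreal (jbr r powr (2 * \<alpha>) * cmod (RG \<alpha> k f r))
      = ennreal (jbr r powr (2 * \<alpha>)) * ennreal (norm (integral\<^sup>L lborel h))"
    unfolding RG_def set_lebesgue_integral_def h_def[symmetric] by (simp add: ennreal_mult)
  also have "\<dots> \<le> ennreal (jbr r powr (2 * \<alpha>)) * (\<integral>\<^sup>+\<rho>. ennreal (norm (h \<rho>)) \<partial>lborel)"
    using integral_norm_bound_ennreal[OF \<open>integrable lborel h\<close>] by (intro mult_left_mono) auto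
  also have "\<dots> = (\<integral>\<^sup>+\<rho>. ennreal (jbr r powr (2 * \<alpha>) * norm (h \<rho>)) \<partial>lborel)"
    using \<open>integrable lborel h\<close> by (simp add: nn_integral_cmult ennreal_mult)
  also have "\<dots> \<le> (\<integral>\<^sup>+\<rho>. ennreal (Gk_weighted \<alpha> k r \<rho> * (indicator {0<..} \<rho> * cmod (f \<rho>))) \<partial>lborel)"
    using jbr_powr_mult_abs_Gk_le_Gk_weighted[OF r, of _ \<alpha> k]
    by (intro nn_integral_mono ennreal_leI)
      (auto simp: h_def norm_mult indicator_def mult_right_mono simp flip: mult.assoc)
  finally show ?thesis .
qed

lemma indicator_mult_jbr_powr_RG_square_le:
  assumes \<alpha>: "0 < \<alpha>" "\<alpha> < 1" and k: "k \<noteq> 0"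
    and f_meas: "set_borel_measurable lborel {0<..} f"
    and f_L2: "set_integrable lborel {0<..} (\<lambda>x. (cmod (f x))\<^sup>2)"
  shows "ennreal (indicator {0<..} r * (jbr r powr (4 * \<alpha>) * (cmod (RG \<alpha> k f r))\<^sup>2))
    \<le> (\<integral>\<^sup>+\<rho>. ennreal (Gk_weighted \<alpha> k r \<rho> * (indicator {0<..} \<rho> * cmod (f \<rho>))) \<partial>lborel)\<^sup>2"
proof (cases "0 < r")
  case True
  have "jbr r powr (4 * \<alpha>) * (cmod (RG \<alpha> k f r))\<^sup>2 = (jbr r powr (2 * \<alpha>) * cmod (RG \<alpha> k f r))\<^sup>2"
    by (simp add: power_mult_distrib power2_eq_square flip: powr_add)
  then show ?thesis
    using jbr_powr_norm_RG_le[OF \<alpha> k True f_meas f_L2] True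
    by (simp add: power_mono_ennreal flip: ennreal_power)
qed simp

theorem corollary3p5:
  fixes \<alpha> :: real and k :: int and f :: "real \<Rightarrow> complex"
  assumes "0 < \<alpha>" "\<alpha> < 1" "k \<noteq> 0"
    and "set_borel_measurable lborel {0<..} f"
    and "set_integrable lborel {0<..} (\<lambda>x. (cmod (f x))\<^sup>2)"
  shows "(\<forall>r>0. set_integrable lborel {0<..} (\<lambda>\<rho>. complex_of_real (Gk \<alpha> k r \<rho>) * f \<rho>))
    \<and> set_integrable lborel {0<..} (\<lambda>r. (jbr r) powr (4 * \<alpha>) * (cmod (RG \<alpha> k f r))\<^sup>2)"
proof -
  note \<alpha> = assms(1,2) and k = assms(3) and f_meas = assms(4) and f_L2 = assms(5)
  define u where "u \<rho> = indicator {0<..} \<rho> * cmod (f \<rho>)" for \<rho>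
  have [measurable]: "u \<in> borel_measurable lborel" "RG \<alpha> k f \<in> borel_measurable lborel"
    unfolding u_def using borel_measurable_indicator_mult_norm[OF f_meas] borel_measurable_RG[OF f_meas]
    by auto
  have u_nonneg: "0 \<le> u \<rho>" for \<rho>
    by (simp add: u_def)
  obtain C where C: "C < \<infinity>"
    and rows: "\<And>x. (\<integral>\<^sup>+y. ennreal (Gk_weighted \<alpha> k x y) \<partial>lborel) \<le> C"
    and columns: "\<And>y. (\<integral>\<^sup>+x. ennreal (Gk_weighted \<alpha> k x y) \<partial>lborel) \<le> C"
    using nn_integral_Gk_weighted_bounded[OF \<alpha> k] by metis
  have "(\<integral>\<^sup>+r. ennreal (indicator {0<..} r * (jbr r powr (4 * \<alpha>) * (cmod (RG \<alpha> k f r))\<^sup>2)) \<partial>lborel)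
      \<le> (\<integral>\<^sup>+r. (\<integral>\<^sup>+\<rho>. ennreal (Gk_weighted \<alpha> k r \<rho> * u \<rho>) \<partial>lborel)\<^sup>2 \<partial>lborel)"
    unfolding u_def by (intro nn_integral_mono indicator_mult_jbr_powr_RG_square_le \<alpha> k f_meas f_L2)
  also have "\<dots> \<le> C * C * (\<integral>\<^sup>+\<rho>. ennreal ((u \<rho>)\<^sup>2) \<partial>lborel)"
    by (rule Schur_test_nn_integral[OF lborel.sigma_finite_measure_axioms lborel.sigma_finite_measure_axioms])
      (use rows columns Gk_weighted_nonneg u_nonneg in auto)
  also have "\<dots> < \<infinity>"
    using C nn_integral_indicator_norm_square_finite[OF f_L2] by (simp add: u_def ennreal_mult_less_top)
  finally show ?thesis
    using set_integrable_Gk_mult[OF \<alpha> k _ f_meas f_L2]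
    unfolding set_integrable_def integrable_iff_bounded by (simp add: abs_mult)
qed

end
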